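(* Let $\mathcal{H}_A,\mathcal{H}_B$ be finite-dimensional Hilbert spaces with fixed reference bases and the product basis on $\mathcal{H}_A\otimes\mathcal{H}_B$. For every state $\rho_{AB}$ with reduced state $\rho_B$, $$C_f(\rho_{AB})\geq C^{A|B}_f(\rho_{AB})+C_f(\rho_B).$$
   Context: $S$ is the von Neumann entropy; for a system with reference basis, $\Delta$ denotes complete dephasing in that basis, and $\Delta_A=\Delta\otimes\mathrm{id}_B$ dephases only $A$. $C_f(\rho)=\min\sum_ip_iS(\Delta(|\psi_i\rangle\langle\psi_i|))$ over pure-state decompositions $\rho=\sum_ip_i|\psi_i\rangle\langle\psi_i|$ (product basis for $\rho_{AB}$). $C^{A|B}_f(\rho_{AB})=\min\sum_ip_iS(\Delta_A(|\psi_i\rangle\langle\psi_i|_{AB}))$ over pure-state decompositions of $\rho_{AB}$. *)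

theory Defs
  imports Complex_Main "Jordan_Normal_Form.Char_Poly"
begin

text \<open>Finite-dimensional quantum states as complex matrices (Jordan_Normal_Form).
  Reference basis of C^n: the standard basis. Product basis of C^dA (x) C^dB:
  basis vector |a>|b> has index a * dB + b.\<close>

definition mtrace :: "complex mat \<Rightarrow> complex" where
  "mtrace A = (\<Sum>i<dim_row A. A $$ (i, i))"

definition density_op :: "nat \<Rightarrow> complex mat \<Rightarrow> bool" where
  "density_op n \<rho> \<longleftrightarrow> \<rho> \<in> carrier_mat n n
     \<and> (\<forall>i<n. \<forall>j<n. \<rho> $$ (i, j) = cnj (\<rho> $$ (j, i)))
     \<and> (\<forall>v \<in> carrier_vec n. 0 \<le> Re (\<Sum>i<n. \<Sum>j<n. cnj (v $ i) * \<rho> $$ (i, j) * v $ j))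
     \<and> mtrace \<rho> = 1"

definition proj :: "nat \<Rightarrow> complex vec \<Rightarrow> complex mat" where
  "proj n \<psi> = mat n n (\<lambda>(i, j). \<psi> $ i * cnj (\<psi> $ j))"

definition dephase :: "complex mat \<Rightarrow> complex mat" where
  "dephase \<rho> = mat (dim_row \<rho>) (dim_col \<rho>) (\<lambda>(i, j). if i = j then \<rho> $$ (i, j) else 0)"

text \<open>Dephasing of subsystem A only: Delta (x) id_B in the product basis.\<close>
definition dephase_A :: "nat \<Rightarrow> nat \<Rightarrow> complex mat \<Rightarrow> complex mat" where
  "dephase_A dA dB \<rho> = mat (dA * dB) (dA * dB)
     (\<lambda>(i, j). if i div dB = j div dB then \<rho> $$ (i, j) else 0)"

definition ptrace_A :: "nat \<Rightarrow> nat \<Rightarrow> complex mat \<Rightarrow> complex mat" where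
  "ptrace_A dA dB \<rho> = mat dB dB (\<lambda>(b, b'). \<Sum>a<dA. \<rho> $$ (a * dB + b, a * dB + b'))"

text \<open>Von Neumann entropy (base 2): -sum over eigenvalues, counted with algebraic
  multiplicity as roots of the characteristic polynomial, of lambda log lambda
  (with 0 log 0 = 0).\<close>
definition eta :: "real \<Rightarrow> real" where
  "eta x = (if x \<le> 0 then 0 else x * log 2 x)"

definition vn_entropy :: "complex mat \<Rightarrow> real" where
  "vn_entropy \<rho> = - (\<Sum>z \<in> {z. poly (char_poly \<rho>) z = 0}.
       real (order z (char_poly \<rho>)) * eta (Re z))"

definition pure_decomp :: "nat \<Rightarrow> complex mat \<Rightarrow> nat \<Rightarrow> (nat \<Rightarrow> real) \<Rightarrow> (nat \<Rightarrow> complex vec) \<Rightarrow> bool" where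
  "pure_decomp n \<rho> k p \<psi> \<longleftrightarrow>
     (\<forall>i<k. 0 \<le> p i \<and> \<psi> i \<in> carrier_vec n \<and> (\<Sum>j<n. (cmod (\<psi> i $ j))\<^sup>2) = 1)
     \<and> (\<Sum>i<k. p i) = 1
     \<and> \<rho> = mat n n (\<lambda>(r, c). \<Sum>i<k. complex_of_real (p i) * (proj n (\<psi> i) $$ (r, c)))"

text \<open>Coherence of formation (minimum over decompositions, written as infimum).\<close>
definition Cf :: "nat \<Rightarrow> complex mat \<Rightarrow> real" where
  "Cf n \<rho> = Inf {(\<Sum>i<k. p i * vn_entropy (dephase (proj n (\<psi> i)))) | k p \<psi>. pure_decomp n \<rho> k p \<psi>}"

definition Cf_AB :: "nat \<Rightarrow> nat \<Rightarrow> complex mat \<Rightarrow> real" where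
  "Cf_AB dA dB \<rho> = Inf {(\<Sum>i<k. p i * vn_entropy (dephase_A dA dB (proj (dA * dB) (\<psi> i)))) | k p \<psi>.
       pure_decomp (dA * dB) \<rho> k p \<psi>}"

end

theory Submission
  imports Defs
begin

text \<open>For a pure state \<open>\<psi>\<close> on \<open>AB\<close>, let \<open>q\<^sub>a\<close> be its weight on the block of \<open>a\<close> and
  \<open>\<phi>\<^sub>a\<close> the normalised block. The grouping property of the Shannon entropy gives
  \<open>S(\<Delta>\<psi>) = S(\<Delta>\<^sub>A\<psi>) + \<Sum>\<^sub>a q\<^sub>a S(\<Delta>\<phi>\<^sub>a)\<close>. For a decomposition \<open>{p\<^sub>i, \<psi>\<^sub>i}\<close> of
  \<open>\<rho>\<^sub>A\<^sub>B\<close>, the states \<open>\<phi>\<^sub>i\<^sub>a\<close> with weights \<open>p\<^sub>i q\<^sub>i\<^sub>a\<close> decompose \<open>\<rho>\<^sub>B\<close>, so the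
  average of the left-hand side is at least \<open>C\<^sub>f\<^sup>A\<^sup>|\<^sup>B(\<rho>\<^sub>A\<^sub>B) + C\<^sub>f(\<rho>\<^sub>B)\<close>. The
  spectrum of \<open>\<Delta>\<^sub>A\<psi>\<close> is read off a triangular matrix similar to it, and decompositions
  exist by a Cholesky factorisation of \<open>\<rho>\<close>.\<close>

section \<open>Shannon entropy of weights\<close>

lemma eta_zero [simp]: "eta 0 = 0"
  by (simp add: eta_def)

lemma eta_pos: "0 < x \<Longrightarrow> eta x = x * log 2 x"
  by (simp add: eta_def)

lemma eta_nonpos: "0 \<le> x \<Longrightarrow> x \<le> 1 \<Longrightarrow> eta x \<le> 0"
  by (auto simp: eta_def mult_nonneg_nonpos)

lemma sum_eta_nonpos:
  assumes "finite I" and "\<And>i. i \<in> I \<Longrightarrow> 0 \<le> x i" and "sum x I = 1"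
  shows "(\<Sum>i\<in>I. eta (x i)) \<le> 0"
proof (rule sum_nonpos, rule eta_nonpos)
  fix i assume "i \<in> I"
  show "0 \<le> x i" by (fact assms(2)[OF \<open>i \<in> I\<close>])
  have "x i \<le> sum x I" by (rule member_le_sum) (use assms \<open>i \<in> I\<close> in auto)
  then show "x i \<le> 1" using assms(3) by simp
qed

lemma sum_eta_group:
  fixes x :: "nat \<Rightarrow> real"
  assumes "\<And>b. b < m \<Longrightarrow> 0 \<le> x b" and "q = (\<Sum>b<m. x b)"
  shows "(\<Sum>b<m. eta (x b)) = eta q + q * (\<Sum>b<m. eta (x b / q))"
proof (cases "q = 0")
  case True
  then have "x b = 0" if "b < m" for b
    using assms sum_nonneg_eq_0_iff[of "{..<m}" x] that by auto
  then show ?thesis using True by simp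
next
  case False
  then have q: "0 < q" using assms sum_nonneg[of "{..<m}" x] by force
  have "q * eta (x b / q) = eta (x b) - x b * log 2 q" if "b < m" for b
  proof (cases "x b = 0")
    case False
    then have "0 < x b" using assms(1)[OF that] by simp
    moreover have "0 < x b / q" using \<open>0 < x b\<close> q by simp
    ultimately have "q * eta (x b / q) = x b * log 2 (x b / q)" using q by (simp add: eta_pos)
    also have "\<dots> = x b * log 2 (x b) - x b * log 2 q"
      using \<open>0 < x b\<close> q by (simp add: log_divide right_diff_distrib)
    finally show ?thesis using \<open>0 < x b\<close> by (simp add: eta_pos)
  qed simp
  then have "q * (\<Sum>b<m. eta (x b / q)) = (\<Sum>b<m. eta (x b)) - (\<Sum>b<m. x b) * log 2 q"
    by (simp add: sum_distrib_left sum_distrib_right sum_subtractf)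
  then show ?thesis using q assms(2) by (simp add: eta_def)
qed

section \<open>Entropy of triangular matrices\<close>

lemma order_linear_factor: "order z [:-c, 1:] = (if z = c then 1 else (0::nat))"
  using order_power_n_n[of c 1] by (auto intro: order_0I)

lemma prod_linear_factors_nonzero: "(\<Prod>c\<leftarrow>cs. [:-c, 1:]) \<noteq> (0::'a::idom poly)"
proof -
  have "[:-c, 1:] \<noteq> (0::'a poly)" for c by simp
  then show ?thesis by (auto simp: prod_list_zero_iff simp del: pCons_eq_0_iff)
qed

lemma sum_roots_prod_linear_factors:
  fixes f :: "'a :: idom \<Rightarrow> real"
  defines "P \<equiv> \<lambda>cs. \<Prod>c\<leftarrow>cs. [:-c, 1:]"
  shows "(\<Sum>z\<in>{z. poly (P cs) z = 0}. real (order z (P cs)) * f z) = (\<Sum>c\<leftarrow>cs. f c)"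
proof -
  have "(\<Sum>z\<in>F. real (order z (P cs)) * f z) = (\<Sum>c\<leftarrow>cs. f c)"
    if "finite F" "set cs \<subseteq> F" for F
    using that(2)
  proof (induction cs)
    case (Cons c cs)
    have P_Cons: "P (c # cs) = [:-c, 1:] * P cs" by (simp add: P_def)
    have nz: "[:-c, 1:] * P cs \<noteq> 0"
      using prod_linear_factors_nonzero[of "c # cs"] unfolding P_def by simp
    have "order z (P (c # cs)) = (if z = c then 1 else 0) + order z (P cs)" for z
      unfolding P_Cons by (simp only: order_mult[OF nz] order_linear_factor)
    then have "real (order z (P (c # cs))) * f z
        = (if z = c then f z else 0) + real (order z (P cs)) * f z" for z
      by (simp add: distrib_right)
    then have "(\<Sum>z\<in>F. real (order z (P (c # cs))) * f z)
        = (\<Sum>z\<in>F. if z = c then f z else 0) + (\<Sum>z\<in>F. real (order z (P cs)) * f z)"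
      by (simp add: sum.distrib)
    then show ?case using Cons \<open>finite F\<close> by simp
  qed (simp add: P_def)
  moreover have "finite {z. poly (P cs) z = 0}"
    using prod_linear_factors_nonzero[of cs] by (simp add: P_def poly_roots_finite)
  moreover have "set cs \<subseteq> {z. poly (P cs) z = 0}"
    unfolding P_def by (induction cs) auto
  ultimately show ?thesis by blast
qed

lemma vn_entropy_upper_triangular:
  assumes M: "M \<in> carrier_mat n n" and "upper_triangular M"
    and diag: "\<And>i. i < n \<Longrightarrow> M $$ (i, i) = complex_of_real (d i)"
  shows "vn_entropy M = - (\<Sum>i<n. eta (d i))"
proof -
  have "vn_entropy M = - (\<Sum>a\<leftarrow>diag_mat M. eta (Re a))"
    unfolding vn_entropy_def char_poly_upper_triangular[OF assms(1,2)]
    by (subst sum_roots_prod_linear_factors) simp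
  also have "(\<Sum>a\<leftarrow>diag_mat M. eta (Re a)) = (\<Sum>i<n. eta (d i))"
    using M diag by (simp add: diag_mat_def comp_def lessThan_atLeast0
        sum_set_upt_conv_sum_list_nat[symmetric])
  finally show ?thesis .
qed

lemma vn_entropy_similar: "similar_mat A B \<Longrightarrow> vn_entropy A = vn_entropy B"
  unfolding vn_entropy_def by (simp add: char_poly_similar)

section \<open>Dephased pure states\<close>

lemma sum_lessThan_mult_blocks:
  fixes dA dB :: nat
  shows "(\<Sum>k<dA * dB. f k) = (\<Sum>a<dA. \<Sum>b<dB. f (a * dB + b))"
proof -
  have "(\<Sum>k<dA * dB. f k) = (\<Sum>a<dA. sum f {a * dB..<a * dB + dB})"
    by (rule sum.nat_group[symmetric])
  also have "\<dots> = (\<Sum>a<dA. \<Sum>b<dB. f (a * dB + b))"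
  proof (rule sum.cong[OF refl])
    fix a
    have "sum f {0 + a * dB..<dB + a * dB} = (\<Sum>b=0..<dB. f (b + a * dB))"
      by (rule sum.shift_bounds_nat_ivl)
    then show "sum f {a * dB..<a * dB + dB} = (\<Sum>b<dB. f (a * dB + b))"
      by (simp add: add.commute atLeast0LessThan)
  qed
  finally show ?thesis .
qed

lemma block_index_less:
  fixes a b dA dB :: nat
  assumes "a < dA" and "b < dB"
  shows "a * dB + b < dA * dB"
proof -
  have "a * dB + b < (a + 1) * dB" using assms(2) by simp
  also have "\<dots> \<le> dA * dB" using assms(1) by (intro mult_right_mono) auto
  finally show ?thesis .
qed

lemma sum_lessThan_mult_if_block:
  fixes dA dB :: nat
  assumes "a < dA"
  shows "(\<Sum>k<dA * dB. if k div dB = a then f k else 0) = (\<Sum>b<dB. f (a * dB + b))"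
proof -
  have "(\<Sum>k<dA * dB. if k div dB = a then f k else 0)
      = (\<Sum>a'<dA. if a' = a then \<Sum>b<dB. f (a * dB + b) else 0)"
    unfolding sum_lessThan_mult_blocks by (intro sum.cong refl) auto
  then show ?thesis using assms by simp
qed

definition vec_sqnorm :: "nat \<Rightarrow> complex vec \<Rightarrow> real" where
  "vec_sqnorm n v = (\<Sum>i<n. (cmod (v $ i))\<^sup>2)"

definition block_vec :: "nat \<Rightarrow> nat \<Rightarrow> complex vec \<Rightarrow> complex vec" where
  "block_vec dB a v = vec dB (\<lambda>b. v $ (a * dB + b))"

lemma vec_sqnorm_nonneg: "0 \<le> vec_sqnorm n v"
  by (simp add: vec_sqnorm_def sum_nonneg)

lemma vec_sqnorm_eq_0D: "vec_sqnorm n v = 0 \<Longrightarrow> i < n \<Longrightarrow> v $ i = 0"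
  using sum_nonneg_eq_0_iff[of "{..<n}" "\<lambda>i. (cmod (v $ i))\<^sup>2"] by (simp add: vec_sqnorm_def)

lemma vec_sqnorm_block_vec: "vec_sqnorm dB (block_vec dB a v) = (\<Sum>b<dB. (cmod (v $ (a * dB + b)))\<^sup>2)"
  by (simp add: vec_sqnorm_def block_vec_def)

lemma sum_vec_sqnorm_block_vec:
  "(\<Sum>a<dA. vec_sqnorm dB (block_vec dB a v)) = vec_sqnorm (dA * dB) v"
  unfolding vec_sqnorm_block_vec by (simp add: vec_sqnorm_def sum_lessThan_mult_blocks)

lemma vn_entropy_dephase_proj:
  "vn_entropy (dephase (proj n \<psi>)) = - (\<Sum>r<n. eta ((cmod (\<psi> $ r))\<^sup>2))"
  by (rule vn_entropy_upper_triangular)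
     (auto simp: dephase_def proj_def complex_norm_square[symmetric] intro!: upper_triangularI)

definition block_pivot :: "nat \<Rightarrow> 'a :: zero vec \<Rightarrow> nat \<Rightarrow> bool" where
  "block_pivot dB v r \<longleftrightarrow> v $ r \<noteq> 0 \<and> (\<forall>r' < r. r' div dB = r div dB \<longrightarrow> v $ r' = 0)"

lemma block_pivot_unique:
  assumes "block_pivot dB v k" and "block_pivot dB v k'" and "k div dB = k' div dB"
  shows "k = k'"
  using assms unfolding block_pivot_def by (metis linorder_neqE_nat)

lemma block_pivot_exists:
  assumes "v $ c \<noteq> 0"
  obtains k where "block_pivot dB v k" and "k div dB = c div dB" and "k \<le> c"
proof -
  define k where "k = (LEAST k. v $ k \<noteq> 0 \<and> k div dB = c div dB)"
  have k: "v $ k \<noteq> 0 \<and> k div dB = c div dB"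
    unfolding k_def by (rule LeastI[of _ c]) (use assms in auto)
  have "k \<le> c"
    unfolding k_def by (rule Least_le) (use assms in auto)
  moreover have "v $ r' = 0" if "r' < k" "r' div dB = k div dB" for r'
    using not_less_Least[OF that(1)[unfolded k_def]] that(2) k by (auto simp: k_def)
  ultimately show ?thesis using that k unfolding block_pivot_def by blast
qed

text \<open>The columns of \<open>pivot_basis_mat\<close> are the blocks of \<open>\<psi>\<close>, placed at their pivot
  positions, completed by standard basis vectors; in this basis \<open>dephase_A\<close> of \<open>|\<psi>\<rangle>\<langle>\<psi>|\<close>
  becomes the upper triangular \<open>pivot_triangular_mat\<close>.\<close>
definition pivot_basis_mat :: "nat \<Rightarrow> nat \<Rightarrow> complex vec \<Rightarrow> complex mat" where
  "pivot_basis_mat dA dB \<psi> = mat (dA * dB) (dA * dB) (\<lambda>(r, c).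
     if block_pivot dB \<psi> c then (if r div dB = c div dB then \<psi> $ r else 0)
     else (if r = c then 1 else 0))"

definition pivot_triangular_mat :: "nat \<Rightarrow> nat \<Rightarrow> complex vec \<Rightarrow> complex mat" where
  "pivot_triangular_mat dA dB \<psi> = mat (dA * dB) (dA * dB) (\<lambda>(r, c).
     if block_pivot dB \<psi> r \<and> r div dB = c div dB
     then (if c = r then complex_of_real (vec_sqnorm dB (block_vec dB (r div dB) \<psi>)) else cnj (\<psi> $ c))
     else 0)"

lemma mult_mat_index:
  assumes "A \<in> carrier_mat n m" "B \<in> carrier_mat m l" "r < n" "c < l"
  shows "(A * B) $$ (r, c) = (\<Sum>k<m. A $$ (r, k) * B $$ (k, c))"
  using assms by (auto simp: index_mult_mat scalar_prod_def lessThan_atLeast0 intro!: sum.cong)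

lemma dephase_A_proj_index:
  assumes "i < dA * dB" and "j < dA * dB"
  shows "dephase_A dA dB (proj (dA * dB) \<psi>) $$ (i, j)
    = (if i div dB = j div dB then \<psi> $ i * cnj (\<psi> $ j) else 0)"
  using assms by (simp add: dephase_A_def proj_def)

lemma dephase_A_proj_mult_pivot_basis_index:
  assumes r: "r < dA * dB" and c: "c < dA * dB"
  shows "(dephase_A dA dB (proj (dA * dB) \<psi>) * pivot_basis_mat dA dB \<psi>) $$ (r, c)
    = (if r div dB = c div dB then \<psi> $ r * (if block_pivot dB \<psi> c
         then complex_of_real (vec_sqnorm dB (block_vec dB (c div dB) \<psi>)) else cnj (\<psi> $ c)) else 0)"
proof -
  let ?M = "dephase_A dA dB (proj (dA * dB) \<psi>)" and ?P = "pivot_basis_mat dA dB \<psi>"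
  have product: "(?M * ?P) $$ (r, c) = (\<Sum>k<dA * dB. ?M $$ (r, k) * ?P $$ (k, c))"
    by (rule mult_mat_index) (use r c in \<open>simp_all add: dephase_A_def pivot_basis_mat_def\<close>)
  show ?thesis
  proof (cases "block_pivot dB \<psi> c")
    case True
    have "(\<Sum>k<dA * dB. if k div dB = c div dB then \<psi> $ k * cnj (\<psi> $ k) else 0)
        = complex_of_real (vec_sqnorm dB (block_vec dB (c div dB) \<psi>))"
      using sum_lessThan_mult_if_block[of "c div dB" dA dB "\<lambda>k. \<psi> $ k * cnj (\<psi> $ k)"] c
      by (simp add: less_mult_imp_div_less vec_sqnorm_block_vec complex_norm_square[symmetric])
    moreover have "(?M * ?P) $$ (r, c) = (\<Sum>k<dA * dB. (if r div dB = c div dB then \<psi> $ r else 0)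
        * (if k div dB = c div dB then \<psi> $ k * cnj (\<psi> $ k) else 0))"
      unfolding product using r c True
      by (intro sum.cong refl) (auto simp: dephase_A_proj_index pivot_basis_mat_def)
    ultimately show ?thesis using True by (simp add: sum_distrib_left[symmetric])
  next
    case False
    have "(?M * ?P) $$ (r, c) = (\<Sum>k<dA * dB. if k = c then ?M $$ (r, c) else 0)"
      unfolding product using r c False by (intro sum.cong refl) (auto simp: pivot_basis_mat_def)
    then show ?thesis using r c False by (simp add: dephase_A_proj_index)
  qed
qed

lemma pivot_basis_mult_triangular_index:
  assumes r: "r < dA * dB" and c: "c < dA * dB"
  shows "(pivot_basis_mat dA dB \<psi> * pivot_triangular_mat dA dB \<psi>) $$ (r, c)
    = (if r div dB = c div dB then \<psi> $ r * (if block_pivot dB \<psi> c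
         then complex_of_real (vec_sqnorm dB (block_vec dB (c div dB) \<psi>)) else cnj (\<psi> $ c)) else 0)"
proof -
  let ?P = "pivot_basis_mat dA dB \<psi>" and ?R = "pivot_triangular_mat dA dB \<psi>"
    and ?piv = "block_pivot dB \<psi>"
  have product: "(?P * ?R) $$ (r, c) = (\<Sum>k<dA * dB. ?P $$ (r, k) * ?R $$ (k, c))"
    by (rule mult_mat_index) (use r c in \<open>simp_all add: pivot_basis_mat_def pivot_triangular_mat_def\<close>)
  show ?thesis
  proof (cases "\<psi> $ c = 0")
    case True
    then have "\<not> ?piv c" by (simp add: block_pivot_def)
    have "?R $$ (k, c) = 0" if "k < dA * dB" for k
      using that c True block_pivot_unique[of dB \<psi> k]
      by (auto simp: pivot_triangular_mat_def block_pivot_def)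
    then show ?thesis using True \<open>\<not> ?piv c\<close> by (simp add: product)
  next
    case False
    then obtain k0 where k0: "?piv k0" "k0 div dB = c div dB" "k0 \<le> c"
      by (rule block_pivot_exists)
    have "?R $$ (k, c) = 0" if "k < dA * dB" "k \<noteq> k0" for k
      using that c k0 block_pivot_unique[of dB \<psi> k k0] by (auto simp: pivot_triangular_mat_def)
    then have "(?P * ?R) $$ (r, c) = ?P $$ (r, k0) * ?R $$ (k0, c)"
      unfolding product using k0 c
      by (subst sum.mono_neutral_right[of "{..<dA * dB}" "{k0}"]) auto
    moreover have "?piv c \<longleftrightarrow> k0 = c"
      using k0 block_pivot_unique[of dB \<psi> k0 c] by auto
    ultimately show ?thesis
      using k0 r c by (auto simp: pivot_basis_mat_def pivot_triangular_mat_def)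
  qed
qed

lemma dephase_A_proj_mult_pivot_basis:
  "dephase_A dA dB (proj (dA * dB) \<psi>) * pivot_basis_mat dA dB \<psi>
     = pivot_basis_mat dA dB \<psi> * pivot_triangular_mat dA dB \<psi>" (is "?L = ?R")
proof (rule eq_matI)
  fix r c assume "r < dim_row ?R" "c < dim_col ?R"
  then have "r < dA * dB" "c < dA * dB"
    by (simp_all add: pivot_basis_mat_def pivot_triangular_mat_def)
  then show "?L $$ (r, c) = ?R $$ (r, c)"
    by (simp only: dephase_A_proj_mult_pivot_basis_index pivot_basis_mult_triangular_index)
qed (simp_all add: dephase_A_def pivot_basis_mat_def pivot_triangular_mat_def)

lemma pivot_basis_mat_det_nonzero: "det (pivot_basis_mat dA dB \<psi>) \<noteq> 0"
proof -
  let ?P = "pivot_basis_mat dA dB \<psi>"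
  have "det ?P = prod_list (diag_mat ?P)"
  proof (rule det_lower_triangular)
    show "?P \<in> carrier_mat (dA * dB) (dA * dB)" by (simp add: pivot_basis_mat_def)
    fix i j assume "i < j" "j < dA * dB"
    then show "?P $$ (i, j) = 0" by (auto simp: pivot_basis_mat_def block_pivot_def)
  qed
  moreover have "0 \<notin> set (diag_mat ?P)"
    by (auto simp: diag_mat_def pivot_basis_mat_def block_pivot_def)
  ultimately show ?thesis by (simp add: prod_list_zero_iff)
qed

lemma dephase_A_proj_similar_pivot_triangular:
  "similar_mat (dephase_A dA dB (proj (dA * dB) \<psi>)) (pivot_triangular_mat dA dB \<psi>)"
proof -
  define n where "n = dA * dB"
  let ?M = "dephase_A dA dB (proj n \<psi>)" and ?P = "pivot_basis_mat dA dB \<psi>"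
    and ?R = "pivot_triangular_mat dA dB \<psi>"
  have carrier: "?M \<in> carrier_mat n n" "?P \<in> carrier_mat n n" "?R \<in> carrier_mat n n"
    by (simp_all add: n_def dephase_A_def pivot_basis_mat_def pivot_triangular_mat_def)
  obtain Q where Q: "Q \<in> carrier_mat n n" "Q * ?P = 1\<^sub>m n" "?P * Q = 1\<^sub>m n"
    using det_non_zero_imp_unit[OF carrier(2) pivot_basis_mat_det_nonzero, of "()"]
    unfolding Units_def ring_mat_def by auto
  have "?M = ?M * (?P * Q)" using carrier Q by simp
  also have "\<dots> = ?M * ?P * Q" using carrier Q by (simp add: assoc_mult_mat)
  also have "\<dots> = ?P * ?R * Q"
    unfolding n_def dephase_A_proj_mult_pivot_basis ..
  finally have "?M = ?P * ?R * Q" .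
  then show ?thesis
    unfolding similar_mat_def n_def[symmetric] using Q carrier by (blast intro: similar_mat_witI)
qed

lemma sum_eta_block_pivots:
  "(\<Sum>r<dA * dB. eta (if block_pivot dB \<psi> r then vec_sqnorm dB (block_vec dB (r div dB) \<psi>) else 0))
    = (\<Sum>a<dA. eta (vec_sqnorm dB (block_vec dB a \<psi>)))"
  unfolding sum_lessThan_mult_blocks
proof (rule sum.cong[OF refl])
  fix a
  let ?piv = "block_pivot dB \<psi>" and ?q = "vec_sqnorm dB (block_vec dB a \<psi>)"
  show "(\<Sum>b<dB. eta (if ?piv (a * dB + b) then vec_sqnorm dB (block_vec dB ((a * dB + b) div dB) \<psi>)
      else 0)) = eta ?q"
  proof (cases "\<exists>b<dB. \<psi> $ (a * dB + b) \<noteq> 0")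
    case True
    then obtain b0 where b0: "b0 < dB" "\<psi> $ (a * dB + b0) \<noteq> 0" by blast
    obtain k where "?piv k" "k div dB = (a * dB + b0) div dB"
      using block_pivot_exists[where dB = dB, OF b0(2)] by blast
    then have k: "?piv k" "k div dB = a" using b0(1) by auto
    have k_eq: "k = a * dB + k mod dB" using k(2) by (metis div_mult_mod_eq mult.commute)
    have "?piv (a * dB + b) \<longleftrightarrow> b = k mod dB" if "b < dB" for b
    proof
      assume "?piv (a * dB + b)"
      then have "k = a * dB + b" using k block_pivot_unique[of dB \<psi> k] that by simp
      then show "b = k mod dB" using that by simp
    qed (use k k_eq in simp)
    then show ?thesis using b0 by (simp add: if_distrib[of eta] cong: if_cong)
  next
    case False
    then have "\<not> ?piv (a * dB + b)" if "b < dB" for b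
      using that by (auto simp: block_pivot_def)
    moreover have "?q = 0" using False by (simp add: vec_sqnorm_block_vec)
    ultimately show ?thesis by simp
  qed
qed

lemma vn_entropy_dephase_A_proj:
  "vn_entropy (dephase_A dA dB (proj (dA * dB) \<psi>)) = - (\<Sum>a<dA. eta (vec_sqnorm dB (block_vec dB a \<psi>)))"
proof -
  let ?R = "pivot_triangular_mat dA dB \<psi>"
  have "upper_triangular ?R"
    by (rule upper_triangularI) (auto simp: pivot_triangular_mat_def block_pivot_def)
  then have "vn_entropy ?R = - (\<Sum>r<dA * dB. eta (if block_pivot dB \<psi> r
      then vec_sqnorm dB (block_vec dB (r div dB) \<psi>) else 0))"
    by (rule vn_entropy_upper_triangular[rotated]) (auto simp: pivot_triangular_mat_def)
  then show ?thesis
    using vn_entropy_similar[OF dephase_A_proj_similar_pivot_triangular]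
    by (simp add: sum_eta_block_pivots)
qed

section \<open>Decomposing the reduced state\<close>

text \<open>The zero vector is sent to the junk value \<open>e\<^sub>0\<close>; it only ever occurs with weight zero.\<close>
definition normalize_vec :: "nat \<Rightarrow> complex vec \<Rightarrow> complex vec" where
  "normalize_vec n v = (if vec_sqnorm n v = 0 then unit_vec n 0
     else vec n (\<lambda>i. v $ i / complex_of_real (sqrt (vec_sqnorm n v))))"

lemma normalize_vec_carrier: "normalize_vec n v \<in> carrier_vec n"
  by (simp add: normalize_vec_def)

lemma sq_cmod_normalize_vec:
  assumes "vec_sqnorm n v \<noteq> 0" and "i < n"
  shows "(cmod (normalize_vec n v $ i))\<^sup>2 = (cmod (v $ i))\<^sup>2 / vec_sqnorm n v"
  using assms vec_sqnorm_nonneg[of n v]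
  by (simp add: normalize_vec_def norm_divide power_divide)

lemma vec_sqnorm_normalize_vec:
  assumes "0 < n"
  shows "vec_sqnorm n (normalize_vec n v) = 1"
proof (cases "vec_sqnorm n v = 0")
  case True
  have "(cmod (unit_vec n 0 $ i))\<^sup>2 = (if i = 0 then 1 else 0)" if "i < n" for i
    using that by (simp add: unit_vec_def)
  then show ?thesis using True assms by (simp add: vec_sqnorm_def normalize_vec_def)
next
  case False
  then have "vec_sqnorm n (normalize_vec n v) = (\<Sum>i<n. (cmod (v $ i))\<^sup>2 / vec_sqnorm n v)"
    unfolding vec_sqnorm_def[of n "normalize_vec n v"] by (simp add: sq_cmod_normalize_vec)
  also have "\<dots> = 1"
    using False by (simp add: sum_divide_distrib[symmetric] vec_sqnorm_def[symmetric])
  finally show ?thesis .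
qed

lemma vec_sqnorm_mult_proj_normalize_vec:
  assumes "i < n" and "j < n"
  shows "complex_of_real (vec_sqnorm n v) * (normalize_vec n v $ i * cnj (normalize_vec n v $ j))
    = v $ i * cnj (v $ j)"
proof (cases "vec_sqnorm n v = 0")
  case True
  then show ?thesis using vec_sqnorm_eq_0D[OF True] assms by simp
next
  case False
  let ?s = "complex_of_real (sqrt (vec_sqnorm n v))"
  have "?s * ?s = complex_of_real (vec_sqnorm n v)"
    using vec_sqnorm_nonneg[of n v] by (simp flip: of_real_mult)
  moreover have "?s \<noteq> 0" using False vec_sqnorm_nonneg[of n v] by simp
  ultimately show ?thesis
    using False assms by (simp add: normalize_vec_def field_simps)
qed

lemma vec_sqnorm_mult_entropy_normalize_vec:
  "vec_sqnorm n v * vn_entropy (dephase (proj n (normalize_vec n v)))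
     = eta (vec_sqnorm n v) - (\<Sum>i<n. eta ((cmod (v $ i))\<^sup>2))"
proof (cases "vec_sqnorm n v = 0")
  case True
  then show ?thesis using vec_sqnorm_eq_0D[OF True] by simp
next
  case False
  have "(\<Sum>i<n. eta ((cmod (v $ i))\<^sup>2))
      = eta (vec_sqnorm n v) + vec_sqnorm n v * (\<Sum>i<n. eta ((cmod (v $ i))\<^sup>2 / vec_sqnorm n v))"
    by (rule sum_eta_group) (simp_all add: vec_sqnorm_def)
  moreover have "vn_entropy (dephase (proj n (normalize_vec n v)))
      = - (\<Sum>i<n. eta ((cmod (v $ i))\<^sup>2 / vec_sqnorm n v))"
    unfolding vn_entropy_dephase_proj using False by (simp add: sq_cmod_normalize_vec)
  ultimately show ?thesis by simp
qed

lemma pure_decomp_normalize_vec: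
  assumes "0 < n" and "\<And>l. l < k \<Longrightarrow> 0 \<le> c l"
    and "(\<Sum>l<k. c l * vec_sqnorm n (w l)) = 1"
    and "\<rho> = mat n n (\<lambda>(r, s). \<Sum>l<k. complex_of_real (c l) * (w l $ r * cnj (w l $ s)))"
  shows "pure_decomp n \<rho> k (\<lambda>l. c l * vec_sqnorm n (w l)) (\<lambda>l. normalize_vec n (w l))"
  unfolding pure_decomp_def
proof (intro conjI allI impI)
  fix l assume "l < k"
  then show "0 \<le> c l * vec_sqnorm n (w l)"
    using assms(2) vec_sqnorm_nonneg by (simp add: mult_nonneg_nonneg)
  show "normalize_vec n (w l) \<in> carrier_vec n" by (rule normalize_vec_carrier)
  show "(\<Sum>j<n. (cmod (normalize_vec n (w l) $ j))\<^sup>2) = 1"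
    using vec_sqnorm_normalize_vec[OF assms(1)] by (simp add: vec_sqnorm_def)
next
  show "(\<Sum>l<k. c l * vec_sqnorm n (w l)) = 1" by (fact assms(3))
  show "\<rho> = mat n n (\<lambda>(r, s). \<Sum>l<k. complex_of_real (c l * vec_sqnorm n (w l))
      * proj n (normalize_vec n (w l)) $$ (r, s))"
    unfolding assms(4)
    by (intro eq_matI) (simp_all add: proj_def mult.assoc vec_sqnorm_mult_proj_normalize_vec)
qed

lemma vn_entropy_dephase_proj_chain:
  "vn_entropy (dephase (proj (dA * dB) \<psi>)) = vn_entropy (dephase_A dA dB (proj (dA * dB) \<psi>))
     + (\<Sum>a<dA. vec_sqnorm dB (block_vec dB a \<psi>)
          * vn_entropy (dephase (proj dB (normalize_vec dB (block_vec dB a \<psi>)))))"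
proof -
  have "vec_sqnorm dB (block_vec dB a \<psi>)
      * vn_entropy (dephase (proj dB (normalize_vec dB (block_vec dB a \<psi>))))
    = eta (vec_sqnorm dB (block_vec dB a \<psi>)) - (\<Sum>b<dB. eta ((cmod (\<psi> $ (a * dB + b)))\<^sup>2))" for a
    unfolding vec_sqnorm_mult_entropy_normalize_vec by (simp add: block_vec_def)
  then show ?thesis
    unfolding vn_entropy_dephase_proj vn_entropy_dephase_A_proj
    by (simp add: sum_lessThan_mult_blocks sum_subtractf)
qed

lemma pure_decomp_ptrace_A:
  fixes dA dB :: nat
  assumes dB: "0 < dB" and D: "pure_decomp (dA * dB) \<rho> k p \<psi>"
  defines "w \<equiv> \<lambda>m. block_vec dB (m mod dA) (\<psi> (m div dA))"
  shows "pure_decomp dB (ptrace_A dA dB \<rho>) (k * dA)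
     (\<lambda>m. p (m div dA) * vec_sqnorm dB (w m)) (\<lambda>m. normalize_vec dB (w m))"
proof (rule pure_decomp_normalize_vec[OF dB])
  have p: "0 \<le> p i" and \<psi>: "vec_sqnorm (dA * dB) (\<psi> i) = 1" if "i < k" for i
    using D that by (auto simp: pure_decomp_def vec_sqnorm_def)
  have \<rho>: "\<rho> = mat (dA * dB) (dA * dB)
      (\<lambda>(r, s). \<Sum>i<k. complex_of_real (p i) * (\<psi> i $ r * cnj (\<psi> i $ s)))"
    using D by (auto simp: pure_decomp_def proj_def intro!: eq_matI)
  have w: "w (i * dA + a) = block_vec dB a (\<psi> i)" if "a < dA" for i a
    using that by (simp add: w_def)
  show "0 \<le> p (m div dA)" if "m < k * dA" for m
    using that by (intro p) (simp add: less_mult_imp_div_less)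
  have "(\<Sum>m<k * dA. p (m div dA) * vec_sqnorm dB (w m))
      = (\<Sum>i<k. p i * (\<Sum>a<dA. vec_sqnorm dB (block_vec dB a (\<psi> i))))"
    by (simp add: sum_lessThan_mult_blocks w sum_distrib_left)
  also have "\<dots> = 1"
    using D by (simp add: sum_vec_sqnorm_block_vec \<psi> pure_decomp_def)
  finally show "(\<Sum>m<k * dA. p (m div dA) * vec_sqnorm dB (w m)) = 1" .
  show "ptrace_A dA dB \<rho> = mat dB dB
      (\<lambda>(r, s). \<Sum>m<k * dA. complex_of_real (p (m div dA)) * (w m $ r * cnj (w m $ s)))"
  proof (rule eq_matI)
    fix r s assume "r < dim_row (mat dB dB (\<lambda>(r, s). \<Sum>m<k * dA.
        complex_of_real (p (m div dA)) * (w m $ r * cnj (w m $ s))))"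
      and "s < dim_col (mat dB dB (\<lambda>(r, s). \<Sum>m<k * dA.
        complex_of_real (p (m div dA)) * (w m $ r * cnj (w m $ s))))"
    then have r: "r < dB" and s: "s < dB" by auto
    have "ptrace_A dA dB \<rho> $$ (r, s)
        = (\<Sum>a<dA. \<Sum>i<k. complex_of_real (p i) * (\<psi> i $ (a * dB + r) * cnj (\<psi> i $ (a * dB + s))))"
      using r s by (subst \<rho>) (simp add: ptrace_A_def block_index_less)
    also have "\<dots> = (\<Sum>m<k * dA. complex_of_real (p (m div dA)) * (w m $ r * cnj (w m $ s)))"
      using r s by (subst sum.swap) (simp add: sum_lessThan_mult_blocks w block_vec_def)
    finally show "ptrace_A dA dB \<rho> $$ (r, s) = mat dB dB (\<lambda>(r, s). \<Sum>m<k * dA.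
        complex_of_real (p (m div dA)) * (w m $ r * cnj (w m $ s))) $$ (r, s)"
      using r s by simp
  qed (simp_all add: ptrace_A_def)
qed

section \<open>Existence of pure-state decompositions\<close>

definition quad_form :: "nat \<Rightarrow> (nat \<Rightarrow> nat \<Rightarrow> complex) \<Rightarrow> (nat \<Rightarrow> complex) \<Rightarrow> complex" where
  "quad_form n M x = (\<Sum>i<n. \<Sum>j<n. cnj (x i) * M i j * x j)"

definition hermitian_on :: "nat \<Rightarrow> (nat \<Rightarrow> nat \<Rightarrow> complex) \<Rightarrow> bool" where
  "hermitian_on n M \<longleftrightarrow> (\<forall>i<n. \<forall>j<n. M i j = cnj (M j i))"

definition psd_on :: "nat \<Rightarrow> (nat \<Rightarrow> nat \<Rightarrow> complex) \<Rightarrow> bool" where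
  "psd_on n M \<longleftrightarrow> (\<forall>x. 0 \<le> Re (quad_form n M x))"

lemma hermitian_onD: "hermitian_on n M \<Longrightarrow> i < n \<Longrightarrow> j < n \<Longrightarrow> M i j = cnj (M j i)"
  unfolding hermitian_on_def by blast

lemma hermitian_on_diag_real:
  assumes "hermitian_on n M" and "m < n"
  shows "M m m = complex_of_real (Re (M m m))"
proof -
  have "Im (M m m) = Im (cnj (M m m))" using hermitian_onD[OF assms assms(2)] by (rule arg_cong)
  then show ?thesis by (simp add: complex_eq_iff)
qed

lemma quad_form_shift:
  fixes x :: "nat \<Rightarrow> complex"
  assumes H: "hermitian_on n M" and m: "m < n"
  defines "b \<equiv> \<Sum>j<n. M m j * x j"
  shows "quad_form n M (\<lambda>i. x i + (if i = m then t else 0))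
    = quad_form n M x + cnj t * b + t * cnj b + cnj t * t * M m m"
proof -
  have expand: "cnj (x i + (if i = m then t else 0)) * M i j * (x j + (if j = m then t else 0))
      = cnj (x i) * M i j * x j + (if j = m then cnj (x i) * M i j * t else 0)
        + (if i = m then cnj t * M i j * x j else 0) + (if i = m \<and> j = m then cnj t * M i j * t else 0)"
    for i j
    by (cases "i = m"; cases "j = m") (simp_all add: algebra_simps)
  have row: "(\<Sum>i<n. \<Sum>j<n. if i = m then f i j else 0) = (\<Sum>j<n. f m j)"
    and col: "(\<Sum>i<n. \<Sum>j<n. if j = m then f i j else 0) = (\<Sum>i<n. f i m)"
    and diag: "(\<Sum>i<n. \<Sum>j<n. if i = m \<and> j = m then f i j else 0) = f m m"
    for f :: "nat \<Rightarrow> nat \<Rightarrow> complex"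
  proof -
    have "(\<Sum>j<n. if i = m then f i j else 0) = (if i = m then \<Sum>j<n. f i j else 0)"
      and "(\<Sum>j<n. if i = m \<and> j = m then f i j else 0) = (if i = m then f i m else 0)" for i
      using m by simp_all
    then show "(\<Sum>i<n. \<Sum>j<n. if i = m then f i j else 0) = (\<Sum>j<n. f m j)"
      "(\<Sum>i<n. \<Sum>j<n. if j = m then f i j else 0) = (\<Sum>i<n. f i m)"
      "(\<Sum>i<n. \<Sum>j<n. if i = m \<and> j = m then f i j else 0) = f m m"
      using m by simp_all
  qed
  have "quad_form n M (\<lambda>i. x i + (if i = m then t else 0))
      = quad_form n M x + (\<Sum>i<n. cnj (x i) * M i m * t) + (\<Sum>j<n. cnj t * M m j * x j)
        + cnj t * M m m * t"
    unfolding quad_form_def expand by (simp only: sum.distrib row col diag)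
  moreover have "(\<Sum>i<n. cnj (x i) * M i m) = cnj b"
    unfolding b_def cnj_sum
  proof (rule sum.cong[OF refl])
    fix i assume "i \<in> {..<n}"
    then have "M i m = cnj (M m i)" using m by (intro hermitian_onD[OF H]) auto
    then show "cnj (x i) * M i m = cnj (M m i * x i)" by simp
  qed
  then have "(\<Sum>i<n. cnj (x i) * M i m * t) = t * cnj b"
    by (simp add: sum_distrib_right[of _ _ t, symmetric])
  moreover have "(\<Sum>j<n. cnj t * M m j * x j) = cnj t * b"
    by (simp add: b_def sum_distrib_left mult.assoc)
  ultimately show ?thesis by (simp add: algebra_simps)
qed

lemma quad_form_unit:
  assumes "m < n"
  shows "quad_form n M (\<lambda>i. if i = m then 1 else 0) = M m m"
proof -
  have "(\<Sum>j<n. cnj (if i = m then 1 else 0) * M i j * (if j = m then 1 else 0))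
      = (if i = m then M i m else 0)" for i
    using assms by (cases "i = m") (simp_all add: if_distrib cong: if_cong)
  then show ?thesis using assms by (simp add: quad_form_def)
qed

lemma psd_on_diag_nonneg: "psd_on n M \<Longrightarrow> m < n \<Longrightarrow> 0 \<le> Re (M m m)"
  using quad_form_unit[of m n M] unfolding psd_on_def by metis

text \<open>A vanishing diagonal entry of a positive semidefinite matrix kills its row: otherwise
  moving along \<open>e\<^sub>j - s b e\<^sub>m\<close> with \<open>b = M m j\<close> and \<open>s\<close> large makes the form negative.\<close>
lemma psd_on_diag_zero_imp_row_zero:
  assumes H: "hermitian_on n M" and P: "psd_on n M" and m: "m < n" and j: "j < n"
    and diag: "Re (M m m) \<le> 0"
  shows "M m j = 0"
proof (rule ccontr)
  assume nz: "M m j \<noteq> 0"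
  define b where "b = M m j"
  have M0: "M m m = 0"
    using hermitian_on_diag_real[OF H m] psd_on_diag_nonneg[OF P m] diag by simp
  define x where "x = (\<lambda>i. if i = j then (1::complex) else 0)"
  have bx: "(\<Sum>l<n. M m l * x l) = b"
    unfolding x_def b_def using j by (simp add: if_distrib cong: if_cong)
  define s where "s = (\<bar>Re (M j j)\<bar> + 1) / (2 * (cmod b)\<^sup>2)"
  define t where "t = - complex_of_real s * b"
  have "cnj t * b + t * cnj b = - complex_of_real (2 * s * (cmod b)\<^sup>2)"
    unfolding t_def using complex_norm_square[of b, symmetric] by (simp add: algebra_simps)
  then have "quad_form n M (\<lambda>i. x i + (if i = m then t else 0))
      = M j j - complex_of_real (2 * s * (cmod b)\<^sup>2)"
    using quad_form_shift[OF H m, of x t, unfolded bx] quad_form_unit[OF j, of M] M0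
    by (simp add: x_def add.assoc)
  moreover have "2 * s * (cmod b)\<^sup>2 = \<bar>Re (M j j)\<bar> + 1"
    unfolding s_def using nz by (simp add: b_def)
  ultimately have "Re (quad_form n M (\<lambda>i. x i + (if i = m then t else 0))) < 0"
    by simp
  then show False using P unfolding psd_on_def by (metis not_le)
qed

text \<open>The quadratic form of the Schur complement at \<open>x\<close> equals that of \<open>M\<close> at
  \<open>x - (b / M m m) e\<^sub>m\<close>, where \<open>b = (M x)\<^sub>m\<close>.\<close>
lemma psd_on_schur_complement:
  assumes H: "hermitian_on n M" and P: "psd_on n M" and m: "m < n" and pos: "0 < Re (M m m)"
  shows "psd_on n (\<lambda>i j. M i j - M i m * cnj (M j m) / complex_of_real (Re (M m m)))"
  unfolding psd_on_def
proof
  fix x :: "nat \<Rightarrow> complex"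
  define A where "A = complex_of_real (Re (M m m))"
  define b where "b = (\<Sum>j<n. M m j * x j)"
  have Mmm: "M m m = A" using hermitian_on_diag_real[OF H m] by (simp add: A_def)
  have A: "A \<noteq> 0" "cnj A = A" using pos by (simp_all add: A_def complex_eq_iff)
  have "(\<Sum>j<n. cnj (M j m) * x j) = b"
    unfolding b_def by (intro sum.cong refl) (use hermitian_onD[OF H m] in simp)
  moreover have "(\<Sum>i<n. cnj (x i) * M i m) = cnj b"
    unfolding b_def cnj_sum by (intro sum.cong refl) (use hermitian_onD[OF H _ m] in simp)
  moreover have "quad_form n (\<lambda>i j. M i j - M i m * cnj (M j m) / A) x
      = quad_form n M x - (\<Sum>i<n. \<Sum>j<n. cnj (x i) * M i m * (cnj (M j m) * x j) / A)"
    by (simp add: quad_form_def sum_subtractf algebra_simps)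
  moreover have "(\<Sum>i<n. \<Sum>j<n. cnj (x i) * M i m * (cnj (M j m) * x j) / A)
      = (\<Sum>i<n. cnj (x i) * M i m) * (\<Sum>j<n. cnj (M j m) * x j) / A"
    by (simp add: sum_product sum_divide_distrib)
  ultimately have "quad_form n (\<lambda>i j. M i j - M i m * cnj (M j m) / A) x
      = quad_form n M x - cnj b * b / A"
    by simp
  also have "\<dots> = quad_form n M (\<lambda>i. x i + (if i = m then - b / A else 0))"
    unfolding quad_form_shift[OF H m] b_def[symmetric] Mmm using A by (simp add: field_simps)
  finally show "0 \<le> Re (quad_form n (\<lambda>i j. M i j - M i m * cnj (M j m) / complex_of_real (Re (M m m))) x)"
    using P unfolding psd_on_def A_def by simp
qed

text \<open>One step of a Cholesky factorisation. When \<open>M m m = 0\<close>, the vector \<open>v\<close> is \<open>0\<close> through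
  division by zero, which is exactly right since the \<open>m\<close>-th row then vanishes.\<close>
lemma psd_on_remove_column:
  assumes H: "hermitian_on n M" and P: "psd_on n M" and m: "m < n"
  defines "v \<equiv> \<lambda>i. M i m / complex_of_real (sqrt (Re (M m m)))"
  shows "hermitian_on n (\<lambda>i j. M i j - v i * cnj (v j))"
    and "psd_on n (\<lambda>i j. M i j - v i * cnj (v j))"
    and "\<And>j. j < n \<Longrightarrow> M m j - v m * cnj (v j) = 0"
proof -
  define A where "A = Re (M m m)"
  have "0 \<le> A" unfolding A_def by (rule psd_on_diag_nonneg[OF P m])
  then have "complex_of_real (sqrt A) * cnj (complex_of_real (sqrt A)) = complex_of_real A"
    by (simp flip: of_real_mult)
  then have vv: "v i * cnj (v j) = M i m * cnj (M j m) / complex_of_real A" for i j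
    by (simp add: v_def A_def)
  show "hermitian_on n (\<lambda>i j. M i j - v i * cnj (v j))"
    unfolding hermitian_on_def
  proof (intro allI impI)
    fix i j assume "i < n" "j < n"
    then have "M i j = cnj (M j i)" by (rule hermitian_onD[OF H])
    then show "M i j - v i * cnj (v j) = cnj (M j i - v j * cnj (v i))"
      by (simp add: mult.commute)
  qed
  show "psd_on n (\<lambda>i j. M i j - v i * cnj (v j))"
  proof (cases "A = 0")
    case True
    then show ?thesis using P by (simp add: v_def A_def)
  next
    case False
    then show ?thesis
      using psd_on_schur_complement[OF H P m] \<open>0 \<le> A\<close> by (simp add: vv A_def)
  qed
  show "M m j - v m * cnj (v j) = 0" if j: "j < n" for j
  proof (cases "A = 0")
    case True
    then show ?thesis using psd_on_diag_zero_imp_row_zero[OF H P m j] by (simp add: v_def A_def)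
  next
    case False
    have "M m m = complex_of_real A" using hermitian_on_diag_real[OF H m] by (simp add: A_def)
    moreover have "cnj (M j m) = M m j" using hermitian_onD[OF H m j] by simp
    ultimately show ?thesis using False by (simp add: vv)
  qed
qed

lemma psd_on_gram_decomposition:
  assumes "hermitian_on n M" and "psd_on n M"
    and "\<And>i j. i < n \<Longrightarrow> j < n \<Longrightarrow> i < m \<or> j < m \<Longrightarrow> M i j = 0"
  shows "\<exists>w. \<forall>i<n. \<forall>j<n. M i j = (\<Sum>l\<in>{m..<n}. w l i * cnj (w l j))"
  using assms
proof (induction "n - m" arbitrary: m M)
  case 0
  then show ?case by auto
next
  case (Suc d)
  then have m: "m < n" by simp
  define v where "v i = M i m / complex_of_real (sqrt (Re (M m m)))" for i
  define M' where "M' i j = M i j - v i * cnj (v j)" for i j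
  note split = psd_on_remove_column[OF Suc.prems(1,2) m, folded v_def, folded M'_def]
  have zero: "M' i j = 0" if "i < n" "j < n" "i < Suc m \<or> j < Suc m" for i j
  proof -
    have "v k = 0" if "k < m" for k using Suc.prems(3)[OF _ m] that m by (simp add: v_def)
    moreover have "M' i m = 0" if "i < n" for i
      using hermitian_onD[OF split(1) that m] split(3)[OF that] by (simp add: M'_def)
    ultimately show ?thesis
      using that Suc.prems(3) split(3) by (auto simp: M'_def less_Suc_eq)
  qed
  have "d = n - Suc m" using Suc.hyps(2) by simp
  then obtain w where w: "\<forall>i<n. \<forall>j<n. M' i j = (\<Sum>l\<in>{Suc m..<n}. w l i * cnj (w l j))"
    using Suc.hyps(1)[OF _ split(1,2) zero] by blast
  have "M i j = (\<Sum>l\<in>{m..<n}. (w(m := v)) l i * cnj ((w(m := v)) l j))" if "i < n" "j < n" for i j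
  proof -
    have "M i j = v i * cnj (v j) + M' i j" by (simp add: M'_def)
    then show ?thesis using w that m by (simp add: sum.atLeast_Suc_lessThan)
  qed
  then show ?case by blast
qed

lemma density_op_dim_pos:
  assumes "density_op n \<rho>"
  shows "0 < n"
proof -
  have "\<rho> \<in> carrier_mat n n" and "mtrace \<rho> = 1"
    using assms unfolding density_op_def by blast+
  then show ?thesis by (cases n) (auto simp: mtrace_def)
qed

lemma density_op_pure_decomp_exists:
  assumes "density_op n \<rho>"
  shows "\<exists>k p \<psi>. pure_decomp n \<rho> k p \<psi>"
proof -
  define M where "M i j = \<rho> $$ (i, j)" for i j
  have \<rho>: "\<rho> \<in> carrier_mat n n" and trace: "mtrace \<rho> = 1"
    and herm: "\<forall>i<n. \<forall>j<n. \<rho> $$ (i, j) = cnj (\<rho> $$ (j, i))"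
    and psd: "\<forall>v \<in> carrier_vec n. 0 \<le> Re (\<Sum>i<n. \<Sum>j<n. cnj (v $ i) * \<rho> $$ (i, j) * v $ j)"
    using assms unfolding density_op_def by blast+
  have tr: "(\<Sum>i<n. \<rho> $$ (i, i)) = 1" using \<rho> trace by (simp add: mtrace_def)
  have n: "0 < n" by (rule density_op_dim_pos[OF assms])
  have "hermitian_on n M" using herm unfolding hermitian_on_def M_def .
  moreover have "psd_on n M" unfolding psd_on_def
  proof
    fix x
    have "quad_form n M x = (\<Sum>i<n. \<Sum>j<n. cnj (vec n x $ i) * \<rho> $$ (i, j) * vec n x $ j)"
      by (simp add: quad_form_def M_def)
    moreover have "vec n x \<in> carrier_vec n" by simp
    ultimately show "0 \<le> Re (quad_form n M x)" using psd by (simp only:)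
  qed
  ultimately obtain w where w: "\<forall>i<n. \<forall>j<n. M i j = (\<Sum>l<n. w l i * cnj (w l j))"
    using psd_on_gram_decomposition[of n M 0] by (auto simp: lessThan_atLeast0)
  have "complex_of_real (\<Sum>l<n. vec_sqnorm n (vec n (w l))) = (\<Sum>l<n. \<Sum>i<n. w l i * cnj (w l i))"
    by (simp add: vec_sqnorm_def complex_norm_square[symmetric])
  also have "\<dots> = (\<Sum>i<n. \<Sum>l<n. w l i * cnj (w l i))" by (rule sum.swap)
  also have "\<dots> = (\<Sum>i<n. \<rho> $$ (i, i))" using w by (simp add: M_def)
  finally have "(\<Sum>l<n. 1 * vec_sqnorm n (vec n (w l))) = 1"
    unfolding tr mult_1 by (simp only: of_real_eq_1_iff)
  moreover have "\<rho> = mat n n (\<lambda>(r, s). \<Sum>l<n. complex_of_real 1 * (vec n (w l) $ r * cnj (vec n (w l) $ s)))"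
    using \<rho> w by (intro eq_matI) (simp_all add: M_def)
  ultimately have "pure_decomp n \<rho> n (\<lambda>l. 1 * vec_sqnorm n (vec n (w l))) (\<lambda>l. normalize_vec n (vec n (w l)))"
    by (intro pure_decomp_normalize_vec[OF n]) simp_all
  then show ?thesis by blast
qed

section \<open>Coherence of formation\<close>

lemma vn_entropy_dephase_proj_nonneg:
  "vec_sqnorm n \<psi> = 1 \<Longrightarrow> 0 \<le> vn_entropy (dephase (proj n \<psi>))"
  using sum_eta_nonpos[of "{..<n}" "\<lambda>r. (cmod (\<psi> $ r))\<^sup>2"]
  by (simp add: vn_entropy_dephase_proj vec_sqnorm_def)

lemma vn_entropy_dephase_A_proj_nonneg:
  "vec_sqnorm (dA * dB) \<psi> = 1 \<Longrightarrow> 0 \<le> vn_entropy (dephase_A dA dB (proj (dA * dB) \<psi>))"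
  using sum_eta_nonpos[of "{..<dA}" "\<lambda>a. vec_sqnorm dB (block_vec dB a \<psi>)"] vec_sqnorm_nonneg
  by (simp add: vn_entropy_dephase_A_proj sum_vec_sqnorm_block_vec)

lemma Cf_le:
  assumes "pure_decomp n \<rho> k p \<psi>"
  shows "Cf n \<rho> \<le> (\<Sum>i<k. p i * vn_entropy (dephase (proj n (\<psi> i))))"
  unfolding Cf_def
proof (rule cInf_lower)
  show "bdd_below {\<Sum>i<k. p i * vn_entropy (dephase (proj n (\<psi> i))) | k p \<psi>. pure_decomp n \<rho> k p \<psi>}"
    by (rule bdd_belowI[of _ 0])
       (auto simp: pure_decomp_def vec_sqnorm_def intro!: sum_nonneg mult_nonneg_nonneg
         vn_entropy_dephase_proj_nonneg)
qed (use assms in blast)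

lemma Cf_AB_le:
  assumes "pure_decomp (dA * dB) \<rho> k p \<psi>"
  shows "Cf_AB dA dB \<rho> \<le> (\<Sum>i<k. p i * vn_entropy (dephase_A dA dB (proj (dA * dB) (\<psi> i))))"
  unfolding Cf_AB_def
proof (rule cInf_lower)
  show "bdd_below {\<Sum>i<k. p i * vn_entropy (dephase_A dA dB (proj (dA * dB) (\<psi> i))) | k p \<psi>.
      pure_decomp (dA * dB) \<rho> k p \<psi>}"
    by (rule bdd_belowI[of _ 0])
       (auto simp: pure_decomp_def vec_sqnorm_def intro!: sum_nonneg mult_nonneg_nonneg
         vn_entropy_dephase_A_proj_nonneg)
qed (use assms in blast)

lemma le_Cf:
  assumes "\<exists>k p \<psi>. pure_decomp n \<rho> k p \<psi>"
    and "\<And>k p \<psi>. pure_decomp n \<rho> k p \<psi> \<Longrightarrow> c \<le> (\<Sum>i<k. p i * vn_entropy (dephase (proj n (\<psi> i))))"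
  shows "c \<le> Cf n \<rho>"
  unfolding Cf_def using assms by (intro cInf_greatest) auto

lemma pure_decomp_entropy_split:
  assumes "0 < dB" and D: "pure_decomp (dA * dB) \<rho> k p \<psi>"
  obtains k' p' \<psi>' where "pure_decomp dB (ptrace_A dA dB \<rho>) k' p' \<psi>'"
    and "(\<Sum>i<k. p i * vn_entropy (dephase (proj (dA * dB) (\<psi> i))))
      = (\<Sum>i<k. p i * vn_entropy (dephase_A dA dB (proj (dA * dB) (\<psi> i))))
        + (\<Sum>m<k'. p' m * vn_entropy (dephase (proj dB (\<psi>' m))))"
proof
  define w where "w m = block_vec dB (m mod dA) (\<psi> (m div dA))" for m
  show "pure_decomp dB (ptrace_A dA dB \<rho>) (k * dA)
      (\<lambda>m. p (m div dA) * vec_sqnorm dB (w m)) (\<lambda>m. normalize_vec dB (w m))"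
    unfolding w_def by (rule pure_decomp_ptrace_A[OF assms])
  have "(\<Sum>m<k * dA. p (m div dA) * vec_sqnorm dB (w m) * vn_entropy (dephase (proj dB (normalize_vec dB (w m)))))
      = (\<Sum>i<k. p i * (\<Sum>a<dA. vec_sqnorm dB (block_vec dB a (\<psi> i))
          * vn_entropy (dephase (proj dB (normalize_vec dB (block_vec dB a (\<psi> i)))))))"
    by (simp add: sum_lessThan_mult_blocks w_def sum_distrib_left mult.assoc)
  then show "(\<Sum>i<k. p i * vn_entropy (dephase (proj (dA * dB) (\<psi> i))))
      = (\<Sum>i<k. p i * vn_entropy (dephase_A dA dB (proj (dA * dB) (\<psi> i))))
        + (\<Sum>m<k * dA. p (m div dA) * vec_sqnorm dB (w m) * vn_entropy (dephase (proj dB (normalize_vec dB (w m)))))"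
    by (simp add: vn_entropy_dephase_proj_chain[of dA dB] distrib_left sum.distrib)
qed

theorem lemma3:
  fixes dA dB :: nat and \<rho> :: "complex mat"
  assumes "density_op (dA * dB) \<rho>"
  shows "Cf (dA * dB) \<rho> \<ge> Cf_AB dA dB \<rho> + Cf dB (ptrace_A dA dB \<rho>)"
proof (rule le_Cf)
  show "\<exists>k p \<psi>. pure_decomp (dA * dB) \<rho> k p \<psi>"
    by (rule density_op_pure_decomp_exists[OF assms])
  have "0 < dB" using density_op_dim_pos[OF assms] by simp
  fix k p \<psi> assume D: "pure_decomp (dA * dB) \<rho> k p \<psi>"
  obtain k' p' \<psi>' where D': "pure_decomp dB (ptrace_A dA dB \<rho>) k' p' \<psi>'"
    and split: "(\<Sum>i<k. p i * vn_entropy (dephase (proj (dA * dB) (\<psi> i))))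
      = (\<Sum>i<k. p i * vn_entropy (dephase_A dA dB (proj (dA * dB) (\<psi> i))))
        + (\<Sum>m<k'. p' m * vn_entropy (dephase (proj dB (\<psi>' m))))"
    by (rule pure_decomp_entropy_split[OF \<open>0 < dB\<close> D])
  show "Cf_AB dA dB \<rho> + Cf dB (ptrace_A dA dB \<rho>)
      \<le> (\<Sum>i<k. p i * vn_entropy (dephase (proj (dA * dB) (\<psi> i))))"
    unfolding split using Cf_AB_le[OF D] Cf_le[OF D'] by (rule add_mono)
qed
end
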